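(* Let $X$ be a non-empty recognizable subset of $Z^*$. Then for every integer $p > 0$ there exists $\sigma \in X$ with $|\sigma| > p$.
   Context: $Z^*$ is the commutative group of finite sequences of integers whose last entry is non-zero (including the empty sequence), with pointwise addition (shorter sequence padded by zeros) and the empty sequence as unit; equivalently the free abelian group on countably many generators, isomorphic to $(\mathbb{Q}_{>0},\times,1)$ via exponents of prime factorizations. For $\sigma\in Z^*$, $|\sigma|$ is its length, i.e. the smallest $n_0$ such that $\sigma(n)=0$ for all $n>n_0$. A subset $S$ of a monoid $M$ is recognizable if there exist a finite monoid $N$, a monoid morphism $\varphi\colon M \to N$ and a subset $T \subseteq N$ with $S = \varphi^{-1}(T)$. *)

theory Defs
  imports "HOL-Algebra.Group"
begin

text \<open>Elements of Z* are represented as integer lists whose last entry is non-zero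
  (the empty list included). Entry i of a list, padded by zeros:\<close>

definition zentry :: "int list \<Rightarrow> nat \<Rightarrow> int" where
  "zentry xs i = (if i < length xs then xs ! i else 0)"

definition strip_zeros :: "int list \<Rightarrow> int list" where
  "strip_zeros xs = rev (dropWhile (\<lambda>x. x = 0) (rev xs))"

definition zadd :: "int list \<Rightarrow> int list \<Rightarrow> int list" where
  "zadd xs ys = strip_zeros (map (\<lambda>i. zentry xs i + zentry ys i) [0..<max (length xs) (length ys)])"

definition Zstar :: "int list monoid" where
  "Zstar = \<lparr>carrier = {xs. xs = [] \<or> last xs \<noteq> 0}, mult = zadd, one = []\<rparr>"

text \<open>Recognizable subsets of a monoid M, with the finite monoid N ranging over
  monoids whose elements lie in type 'b (the theorem is stated for arbitrary 'b).\<close>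
definition recognizable :: "'b itself \<Rightarrow> ('a, 'm) monoid_scheme \<Rightarrow> 'a set \<Rightarrow> bool" where
  "recognizable _ M S \<longleftrightarrow>
     (\<exists>(N :: 'b monoid) (\<phi> :: 'a \<Rightarrow> 'b) T.
        monoid N \<and> finite (carrier N) \<and>
        \<phi> \<in> hom M N \<and> \<phi> \<one>\<^bsub>M\<^esub> = \<one>\<^bsub>N\<^esub> \<and>
        T \<subseteq> carrier N \<and> S = {x \<in> carrier M. \<phi> x \<in> T})"

end

theory Submission
  imports Defs
begin

text \<open>
  Since the finite monoid N cannot separate all the elements k e_p (k \<in> \<nat>), two of them,
  a e_p and b e_p with a < b, have the same image. Hence adding d e_p with d = b - a
  maps X into itself, and for \<sigma> \<in> X both \<sigma> + d e_p and \<sigma> + 2d e_p lie in X.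
  Their p-th entries \<sigma>(p) + d and \<sigma>(p) + 2d cannot both vanish, so one of them
  has length greater than p.
\<close>

lemma recognizable_pumping:
  fixes M :: "('a, 'm) monoid_scheme" and u :: "nat \<Rightarrow> 'a"
  assumes "monoid M" and "recognizable TYPE('b) M X" and "range u \<subseteq> carrier M"
  obtains a b where "a < b"
    and "\<And>y. y \<in> carrier M \<Longrightarrow> y \<otimes>\<^bsub>M\<^esub> u a \<in> X \<longleftrightarrow> y \<otimes>\<^bsub>M\<^esub> u b \<in> X"
proof -
  obtain N :: "'b monoid" and \<phi> T where "finite (carrier N)" and hom: "\<phi> \<in> hom M N"
    and X: "X = {x \<in> carrier M. \<phi> x \<in> T}"
    using assms(2) unfolding recognizable_def by blast
  have "range (\<phi> \<circ> u) \<subseteq> carrier N"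
    using hom assms(3) by (auto simp: hom_def)
  then have "\<not> inj (\<phi> \<circ> u)"
    using \<open>finite (carrier N)\<close> by (meson finite_imageD finite_subset infinite_UNIV_nat)
  then obtain a b where "a < b" and same_image: "\<phi> (u a) = \<phi> (u b)"
    unfolding inj_def by (metis comp_apply linorder_neqE_nat)
  have "y \<otimes>\<^bsub>M\<^esub> u a \<in> X \<longleftrightarrow> y \<otimes>\<^bsub>M\<^esub> u b \<in> X" if "y \<in> carrier M" for y
  proof -
    have "u a \<in> carrier M" and "u b \<in> carrier M"
      using assms(3) by auto
    then have "\<phi> (y \<otimes>\<^bsub>M\<^esub> u a) = \<phi> (y \<otimes>\<^bsub>M\<^esub> u b)"
      using \<open>y \<in> carrier M\<close> hom same_image by (simp add: hom_mult)
    then show ?thesis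
      using \<open>u a \<in> carrier M\<close> \<open>u b \<in> carrier M\<close> \<open>y \<in> carrier M\<close>
      by (simp add: X monoid.m_closed[OF assms(1)])
  qed
  then show thesis
    using that \<open>a < b\<close> by blast
qed

lemma zentry_append_zero: "zentry (xs @ [0]) i = zentry xs i"
  by (auto simp: zentry_def nth_append)

lemma zentry_strip_zeros: "zentry (strip_zeros xs) i = zentry xs i"
  by (induction xs rule: rev_induct) (auto simp: strip_zeros_def zentry_append_zero)

lemma strip_zeros_in_carrier: "strip_zeros xs \<in> carrier Zstar"
  by (induction xs rule: rev_induct) (auto simp: strip_zeros_def Zstar_def)

lemma zentry_Nil [simp]: "zentry [] i = 0"
  by (simp add: zentry_def)

lemma zentry_eq_0: "length xs \<le> i \<Longrightarrow> zentry xs i = 0"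
  by (simp add: zentry_def)

lemma Zstar_eqI:
  assumes "xs \<in> carrier Zstar" and "ys \<in> carrier Zstar" and "\<And>i. zentry xs i = zentry ys i"
  shows "xs = ys"
proof -
  have "length xs \<le> length ys" if "xs \<in> carrier Zstar" and "\<And>i. zentry xs i = zentry ys i"
    for xs ys
  proof (rule ccontr)
    assume "\<not> length xs \<le> length ys"
    then have "xs \<noteq> []"
      by auto
    with \<open>\<not> length xs \<le> length ys\<close>
    have "zentry xs (length xs - 1) \<noteq> 0" and "zentry ys (length xs - 1) = 0"
      using that(1) by (auto simp: Zstar_def zentry_def last_conv_nth)
    then show False
      using that(2) by simp
  qed
  then have "length xs = length ys"
    using assms by (metis le_antisym)
  then show ?thesis
    using assms(3) by (metis nth_equalityI zentry_def)
qed

lemma zentry_zadd: "zentry (zadd xs ys) i = zentry xs i + zentry ys i"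
  by (auto simp: zadd_def zentry_strip_zeros zentry_def[of "map _ _"] zentry_eq_0)

lemma zadd_in_carrier: "zadd xs ys \<in> carrier Zstar"
  unfolding zadd_def by (rule strip_zeros_in_carrier)

lemma Nil_in_carrier_Zstar [simp]: "[] \<in> carrier Zstar"
  by (simp add: Zstar_def)

lemma one_Zstar [simp]: "\<one>\<^bsub>Zstar\<^esub> = []"
  by (simp add: Zstar_def)

lemma mult_Zstar [simp]: "xs \<otimes>\<^bsub>Zstar\<^esub> ys = zadd xs ys"
  by (simp add: Zstar_def)

lemma monoid_Zstar: "monoid Zstar"
proof (rule monoidI)
  fix xs ys zs
  show "xs \<otimes>\<^bsub>Zstar\<^esub> ys \<in> carrier Zstar"
    by (simp add: zadd_in_carrier)
  show "xs \<otimes>\<^bsub>Zstar\<^esub> ys \<otimes>\<^bsub>Zstar\<^esub> zs = xs \<otimes>\<^bsub>Zstar\<^esub> (ys \<otimes>\<^bsub>Zstar\<^esub> zs)"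
    by (simp add: Zstar_eqI zadd_in_carrier zentry_zadd)
  show "\<one>\<^bsub>Zstar\<^esub> \<in> carrier Zstar"
    by simp
  assume "xs \<in> carrier Zstar"
  then show "\<one>\<^bsub>Zstar\<^esub> \<otimes>\<^bsub>Zstar\<^esub> xs = xs" and "xs \<otimes>\<^bsub>Zstar\<^esub> \<one>\<^bsub>Zstar\<^esub> = xs"
    by (simp_all add: Zstar_eqI zadd_in_carrier zentry_zadd)
qed

definition zunit :: "nat \<Rightarrow> int \<Rightarrow> int list" where
  "zunit p k = strip_zeros (replicate p 0 @ [k])"

lemma zentry_zunit: "zentry (zunit p k) i = (if i = p then k else 0)"
  unfolding zunit_def zentry_strip_zeros by (simp add: zentry_def nth_append)

lemma zunit_in_carrier: "zunit p k \<in> carrier Zstar"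
  unfolding zunit_def by (rule strip_zeros_in_carrier)

lemma zunit_0: "zunit p 0 = []"
  by (rule Zstar_eqI) (simp_all add: zunit_in_carrier zentry_zunit)

lemma zadd_zunit: "zadd (zunit p a) (zunit p b) = zunit p (a + b)"
  by (rule Zstar_eqI) (auto simp: zadd_in_carrier zunit_in_carrier zentry_zadd zentry_zunit)

lemma recognizable_Zstar_shift_closed:
  assumes "recognizable TYPE('b) Zstar X"
  obtains d :: int where "d > 0" and "\<And>\<sigma>. \<sigma> \<in> X \<Longrightarrow> zadd \<sigma> (zunit p d) \<in> X"
proof -
  interpret Zstar: monoid Zstar
    by (rule monoid_Zstar)
  have "range (\<lambda>k. zunit p (int k)) \<subseteq> carrier Zstar"
    by (auto simp: zunit_in_carrier)
  then obtain a b where "a < b" and pump: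
    "\<And>y. y \<in> carrier Zstar \<Longrightarrow> zadd y (zunit p (int a)) \<in> X \<longleftrightarrow> zadd y (zunit p (int b)) \<in> X"
    using recognizable_pumping[OF monoid_Zstar assms] by (metis mult_Zstar)
  have "zadd \<sigma> (zunit p (int b - int a)) \<in> X" if "\<sigma> \<in> X" for \<sigma>
  proof -
    have \<sigma>: "\<sigma> \<in> carrier Zstar"
      using \<open>\<sigma> \<in> X\<close> assms by (auto simp: recognizable_def)
    define y where "y = zadd \<sigma> (zunit p (- int a))"
    have "zadd y (zunit p (int a)) = \<sigma>"
      using \<sigma> Zstar.m_assoc[of \<sigma>] Zstar.r_one[of \<sigma>]
      by (simp add: y_def zunit_in_carrier zadd_zunit zunit_0)
    moreover have "zadd y (zunit p (int b)) = zadd \<sigma> (zunit p (int b - int a))"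
      using \<sigma> Zstar.m_assoc[of \<sigma>] by (simp add: y_def zunit_in_carrier zadd_zunit)
    ultimately show ?thesis
      using pump[of y] \<open>\<sigma> \<in> X\<close> by (simp add: y_def zadd_in_carrier)
  qed
  moreover have "int b - int a > 0"
    using \<open>a < b\<close> by simp
  ultimately show thesis
    using that by blast
qed

theorem proposition7:
  fixes X :: "int list set"
  assumes "X \<subseteq> carrier Zstar"
    and "X \<noteq> {}"
    and "recognizable TYPE('b) Zstar X"
  shows "\<forall>p::nat. p > 0 \<longrightarrow> (\<exists>\<sigma>\<in>X. length \<sigma> > p)"
proof (intro allI impI)
  fix p :: nat
  obtain d where "d > 0" and shift: "\<And>\<sigma>. \<sigma> \<in> X \<Longrightarrow> zadd \<sigma> (zunit p d) \<in> X"
    using recognizable_Zstar_shift_closed[OF assms(3)] by blast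
  obtain \<sigma> where "\<sigma> \<in> X"
    using assms(2) by blast
  define \<sigma>\<^sub>1 where "\<sigma>\<^sub>1 = zadd \<sigma> (zunit p d)"
  define \<sigma>\<^sub>2 where "\<sigma>\<^sub>2 = zadd \<sigma>\<^sub>1 (zunit p d)"
  have "\<sigma>\<^sub>1 \<in> X" and "\<sigma>\<^sub>2 \<in> X"
    using shift \<open>\<sigma> \<in> X\<close> by (simp_all add: \<sigma>\<^sub>1_def \<sigma>\<^sub>2_def)
  moreover have "zentry \<sigma>\<^sub>1 p \<noteq> 0 \<or> zentry \<sigma>\<^sub>2 p \<noteq> 0"
    using \<open>d > 0\<close> by (simp add: \<sigma>\<^sub>1_def \<sigma>\<^sub>2_def zentry_zadd zentry_zunit)
  ultimately show "\<exists>\<sigma>\<in>X. length \<sigma> > p"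
    by (meson not_le zentry_eq_0)
qed

end
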